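(* Let $N\geq 3$ be an odd integer. For real $\theta$ and $\varepsilon\geq 0$ let $G_\theta(\varepsilon)=(1+\theta)^N+\big(1-\theta(1+\varepsilon)\big)^N-2$ and $\varepsilon_c(\theta)=\inf\{\varepsilon>0: G_\theta(\varepsilon)\leq 0\}$ (with $\inf\emptyset=+\infty$). For positive $\theta\neq 2^{1/N}-1$ define $$f(\theta)=\big(2-(1+\theta)^N\big)^{1/N}-1+\theta(1+\theta)^{N-1}\big(2-(1+\theta)^N\big)^{\frac1N-1}.$$ Then on the interval $\theta>2^{1/N}-1$ the function $\varepsilon_c$ is differentiable with derivative $$\varepsilon_c'(\theta)=\frac{f(\theta)}{\theta^2},$$ and $\varepsilon_c$ has a unique stationary point in this interval, at which it attains its maximum value over the interval $\theta>2^{1/N}-1$ (being increasing before this point and decreasing after it).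
   Context: Root convention: for real $X>0$, $X^{1/N}$ is the positive real $N$-th root; for $X<0$ and $N$ odd, $X^{1/N}=-|X|^{1/N}$; and for an integer $m$, $X^{1/N-m}$ is defined as $Y^{1/N}$ with $Y=X^{1-mN}$, evaluated by the same convention. For $\theta>2^{1/N}-1$ one has $2-(1+\theta)^N<0$, so these conventions are in force; in this range $\varepsilon_c(\theta)=\frac{1-(2-(1+\theta)^N)^{1/N}}{\theta}-1$. *)

theory Defs
  imports "HOL-Analysis.Analysis" "HOL-Library.Extended_Real"
begin

text \<open>Real N-th root with the odd-root convention: Isabelle's root is sign-preserving,
  so for odd N, root N X = -(root N |X|) when X < 0.\<close>

definition G :: "nat \<Rightarrow> real \<Rightarrow> real \<Rightarrow> real" where
  "G N \<theta> \<epsilon> = (1 + \<theta>) ^ N + (1 - \<theta> * (1 + \<epsilon>)) ^ N - 2"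

definition eps_c :: "nat \<Rightarrow> real \<Rightarrow> ereal" where
  "eps_c N \<theta> = Inf (ereal ` {\<epsilon>. \<epsilon> > 0 \<and> G N \<theta> \<epsilon> \<le> 0})"

text \<open>X^(1/N - 1) is read as (X^(1-N))^(1/N) = root N (1 / X^(N-1)).\<close>
definition f :: "nat \<Rightarrow> real \<Rightarrow> real" where
  "f N \<theta> = root N (2 - (1 + \<theta>) ^ N) - 1
     + \<theta> * (1 + \<theta>) ^ (N - 1) * root N (1 / (2 - (1 + \<theta>) ^ N) ^ (N - 1))"

end

theory Submission
  imports Defs
begin

text \<open>For \<open>\<theta> > 2^(1/N) - 1\<close> put \<open>q(\<theta>) = ((1+\<theta>)^N - 2)^(1/N) > 0\<close>. Since \<open>N\<close> is odd,
  \<open>G\<^sub>\<theta>(\<epsilon>) \<le> 0\<close> means \<open>(1 - \<theta>(1+\<epsilon>))^N \<le> (-q)^N\<close>, i.e. \<open>1 - \<theta>(1+\<epsilon>) \<le> -q\<close>, so the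
  admissible \<open>\<epsilon>\<close> form the ray \<open>[E(\<theta>), \<infinity>)\<close> with \<open>E(\<theta>) = (1+q)/\<theta> - 1 > 0\<close>, and
  \<open>\<epsilon>\<^sub>c = E\<close> is smooth. Differentiating gives \<open>\<theta>\<^sup>2 E' = f\<close>, and \<open>f\<close> has the sign of
  \<open>f q^(N-1) = 2 - (1+\<theta>)^(N-1) - q^(N-1)\<close>. This function is strictly decreasing, positive
  at \<open>\<theta> = 2^(1/N) - 1\<close> (where \<open>q = 0\<close>) and negative at \<open>\<theta> = 1\<close>, so it has exactly one
  zero, across which \<open>E'\<close> changes sign from \<open>+\<close> to \<open>-\<close>.\<close>

definition qroot :: "nat \<Rightarrow> real \<Rightarrow> real" where
  "qroot N \<theta> = root N ((1 + \<theta>) ^ N - 2)"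

definition eps_crit :: "nat \<Rightarrow> real \<Rightarrow> real" where
  "eps_crit N \<theta> = (1 + qroot N \<theta>) / \<theta> - 1"

definition f_scaled :: "nat \<Rightarrow> real \<Rightarrow> real" where
  "f_scaled N \<theta> = 2 - (1 + \<theta>) ^ (N - 1) - qroot N \<theta> ^ (N - 1)"

lemma odd_power_le_iff:
  fixes x y :: real
  assumes "odd N"
  shows "x ^ N \<le> y ^ N \<longleftrightarrow> x \<le> y"
proof -
  have "x ^ N \<le> y ^ N \<longleftrightarrow> root N (x ^ N) \<le> root N (y ^ N)"
    using assms by (simp add: odd_pos)
  then show ?thesis
    using assms by (simp add: odd_real_root_power_cancel)
qed

lemma power_add_ge_add_power:
  fixes a b :: real
  assumes "0 \<le> a" "0 \<le> b" "n > 0"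
  shows "a ^ n + b ^ n \<le> (a + b) ^ n"
  using assms(3)
proof (induction n rule: nat_induct_non_zero)
  case (Suc n)
  have "a ^ Suc n + b ^ Suc n \<le> (a + b) * (a ^ n + b ^ n)"
    using assms by (simp add: algebra_simps)
  also have "\<dots> \<le> (a + b) * (a + b) ^ n"
    using Suc.IH assms by (intro mult_left_mono) auto
  finally show ?case by simp
qed simp

lemma root_two_bounds:
  assumes "N \<ge> 2"
  shows "1 < root N 2" "root N 2 < 2"
proof -
  show "1 < root N 2"
    using assms by simp
  have "(2::real) ^ 1 < 2 ^ N"
    using assms by (intro power_strict_increasing) auto
  then have "root N 2 < root N (2 ^ N)"
    using assms by (intro real_root_less_mono) auto
  then show "root N 2 < 2"
    using assms by (simp add: real_root_power_cancel)
qed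

context
  fixes N :: nat and \<theta> :: real
  assumes N_ge: "N \<ge> 3" and \<theta>_gt: "\<theta> > root N 2 - 1"
begin

lemma one_plus_power_gt_two: "(1 + \<theta>) ^ N > 2"
proof -
  have "root N 2 ^ N < (1 + \<theta>) ^ N"
    using root_two_bounds[of N] N_ge \<theta>_gt by (intro power_strict_mono) auto
  then show ?thesis
    using N_ge by simp
qed

lemma theta_pos: "\<theta> > 0"
  using root_two_bounds[of N] N_ge \<theta>_gt by linarith

lemma qroot_pos: "qroot N \<theta> > 0"
  using one_plus_power_gt_two N_ge unfolding qroot_def by simp

lemma qroot_power: "qroot N \<theta> ^ N = (1 + \<theta>) ^ N - 2"
  using one_plus_power_gt_two N_ge unfolding qroot_def by simp

lemma eps_crit_pos:
  assumes "odd N"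
  shows "eps_crit N \<theta> > 0"
proof -
  have "\<theta> - 1 < qroot N \<theta>"
  proof (cases "\<theta> \<le> 1")
    case True
    then show ?thesis using qroot_pos by simp
  next
    case False
    have "(\<theta> - 1) ^ N + 2 < (\<theta> - 1) ^ N + 2 ^ N"
      using N_ge power_strict_increasing[of 1 N "2::real"] by simp
    also have "\<dots> \<le> (1 + \<theta>) ^ N"
      using power_add_ge_add_power[of "\<theta> - 1" 2 N] False N_ge by (simp add: add.commute)
    finally have "(\<theta> - 1) ^ N < qroot N \<theta> ^ N"
      by (simp add: qroot_power)
    then show ?thesis
      using odd_power_le_iff[OF assms] by (meson not_le)
  qed
  then show ?thesis
    unfolding eps_crit_def using theta_pos by (simp add: field_simps)
qed

lemma G_nonpos_iff:
  assumes "odd N"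
  shows "G N \<theta> \<epsilon> \<le> 0 \<longleftrightarrow> eps_crit N \<theta> \<le> \<epsilon>"
proof -
  have "(- qroot N \<theta>) ^ N = 2 - (1 + \<theta>) ^ N"
    using assms by (simp add: power_minus_odd qroot_power)
  then have "G N \<theta> \<epsilon> \<le> 0 \<longleftrightarrow> (1 - \<theta> * (1 + \<epsilon>)) ^ N \<le> (- qroot N \<theta>) ^ N"
    unfolding G_def by linarith
  also have "\<dots> \<longleftrightarrow> 1 - \<theta> * (1 + \<epsilon>) \<le> - qroot N \<theta>"
    by (rule odd_power_le_iff[OF assms])
  also have "\<dots> \<longleftrightarrow> eps_crit N \<theta> \<le> \<epsilon>"
    unfolding eps_crit_def using theta_pos by (simp add: field_simps)
  finally show ?thesis .
qed

lemma eps_c_eq_eps_crit: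
  assumes "odd N"
  shows "eps_c N \<theta> = ereal (eps_crit N \<theta>)"
proof -
  have "{\<epsilon>. \<epsilon> > 0 \<and> G N \<theta> \<epsilon> \<le> 0} = {eps_crit N \<theta>..}"
    using G_nonpos_iff[OF assms] eps_crit_pos[OF assms] by auto
  moreover have "Inf (ereal ` {x..}) = ereal x" for x
  proof (rule antisym)
    show "Inf (ereal ` {x..}) \<le> ereal x"
      by (rule Inf_lower) simp
    show "ereal x \<le> Inf (ereal ` {x..})"
      by (rule Inf_greatest) auto
  qed
  ultimately show ?thesis
    unfolding eps_c_def by simp
qed

lemma f_eq_qroot:
  assumes "odd N"
  shows "f N \<theta> = \<theta> * (1 + \<theta>) ^ (N - 1) / qroot N \<theta> ^ (N - 1) - 1 - qroot N \<theta>"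
proof -
  have root_eq: "root N (2 - (1 + \<theta>) ^ N) = - qroot N \<theta>"
    unfolding qroot_def using real_root_minus[of N "(1 + \<theta>) ^ N - 2"] by simp
  have "root N (1 / (2 - (1 + \<theta>) ^ N) ^ (N - 1)) = 1 / (- qroot N \<theta>) ^ (N - 1)"
    using N_ge by (simp add: real_root_divide real_root_power root_eq)
  also have "\<dots> = 1 / qroot N \<theta> ^ (N - 1)"
    using assms N_ge by simp
  finally show ?thesis
    unfolding f_def root_eq by simp
qed

lemma has_real_derivative_qroot:
  "(qroot N has_real_derivative (1 + \<theta>) ^ (N - 1) / qroot N \<theta> ^ (N - 1)) (at \<theta>)"
proof -
  have "((\<lambda>x. (1 + x) ^ N - 2) has_real_derivative real N * (1 + \<theta>) ^ (N - 1)) (at \<theta>)"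
    by (auto intro!: derivative_eq_intros)
  from DERIV_chain2[OF DERIV_real_root[of N "(1 + \<theta>) ^ N - 2"] this]
  have "(qroot N has_real_derivative
      inverse (real N * qroot N \<theta> ^ (N - 1)) * (real N * (1 + \<theta>) ^ (N - 1))) (at \<theta>)"
    using N_ge one_plus_power_gt_two by (simp add: qroot_def[abs_def])
  then show ?thesis
    using N_ge by (simp add: field_simps)
qed

lemma has_real_derivative_eps_crit:
  assumes "odd N"
  shows "(eps_crit N has_real_derivative f N \<theta> / \<theta>\<^sup>2) (at \<theta>)"
proof -
  have "(eps_crit N has_real_derivative
      (((1 + \<theta>) ^ (N - 1) / qroot N \<theta> ^ (N - 1)) * \<theta> - (1 + qroot N \<theta>)) / \<theta>\<^sup>2) (at \<theta>)"
    unfolding eps_crit_def[abs_def] using theta_pos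
    by (auto intro!: derivative_eq_intros has_real_derivative_qroot simp: power2_eq_square)
  then show ?thesis
    using theta_pos qroot_pos by (simp add: f_eq_qroot[OF assms] field_simps)
qed

lemma f_mult_qroot_power:
  assumes "odd N"
  shows "f N \<theta> * qroot N \<theta> ^ (N - 1) = f_scaled N \<theta>"
proof -
  define P where "P = qroot N \<theta> ^ (N - 1)"
  have N_Suc: "N = Suc (N - 1)"
    using N_ge by simp
  have "P \<noteq> 0"
    unfolding P_def using qroot_pos by simp
  then have "f N \<theta> * P = \<theta> * (1 + \<theta>) ^ (N - 1) - P - qroot N \<theta> * P"
    unfolding f_eq_qroot[OF assms] P_def[symmetric] by (simp add: field_simps)
  moreover have "qroot N \<theta> * P = (1 + \<theta>) ^ N - 2"
    unfolding P_def using qroot_power N_Suc by (metis power_Suc)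
  moreover have "(1 + \<theta>) ^ N = (1 + \<theta>) * (1 + \<theta>) ^ (N - 1)"
    using N_Suc by (metis power_Suc)
  ultimately show ?thesis
    unfolding P_def f_scaled_def by (simp add: algebra_simps)
qed

lemma sgn_deriv_eps_crit:
  assumes "odd N"
  shows "sgn (f N \<theta> / \<theta>\<^sup>2) = sgn (f_scaled N \<theta>)"
  using qroot_pos theta_pos
  by (simp add: f_mult_qroot_power[OF assms, symmetric] sgn_mult)

end

lemma f_scaled_strict_antimono:
  assumes "N \<ge> 3" "root N 2 - 1 \<le> a" "a < b"
  shows "f_scaled N b < f_scaled N a"
proof -
  have a_nonneg: "0 \<le> 1 + a"
    using root_two_bounds[of N] assms by linarith
  have "2 \<le> (1 + a) ^ N"
  proof -
    have "root N 2 ^ N \<le> (1 + a) ^ N"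
      using root_two_bounds[of N] assms by (intro power_mono) auto
    then show ?thesis using assms by simp
  qed
  moreover have "(1 + a) ^ N \<le> (1 + b) ^ N"
    using a_nonneg assms by (intro power_mono) auto
  ultimately have "0 \<le> qroot N a" "qroot N a \<le> qroot N b"
    using assms by (simp_all add: qroot_def)
  then have "qroot N a ^ (N - 1) \<le> qroot N b ^ (N - 1)"
    by (intro power_mono) auto
  moreover have "(1 + a) ^ (N - 1) < (1 + b) ^ (N - 1)"
    using a_nonneg assms by (intro power_strict_mono) auto
  ultimately show ?thesis
    unfolding f_scaled_def by simp
qed

lemma f_scaled_at_root_two_pos:
  assumes "N \<ge> 3"
  shows "f_scaled N (root N 2 - 1) > 0"
proof -
  have N_Suc: "N = Suc (N - 1)"
    using assms by simp
  have "root N 2 ^ (N - 1) < root N 2 * root N 2 ^ (N - 1)"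
    using root_two_bounds[of N] assms by simp
  also have "\<dots> = root N 2 ^ N"
    using N_Suc by (metis power_Suc)
  also have "\<dots> = 2"
    using assms by simp
  finally show ?thesis
    using assms by (simp add: f_scaled_def qroot_def power_0_left)
qed

lemma f_scaled_at_one_neg:
  assumes "N \<ge> 3"
  shows "f_scaled N 1 < 0"
proof -
  have "(2::real) ^ 1 < 2 ^ (N - 1)"
    using assms by (intro power_strict_increasing) auto
  moreover have "(2::real) \<le> 2 ^ N"
    using assms power_increasing[of 1 N "2::real"] by simp
  then have "0 \<le> qroot N 1 ^ (N - 1)"
    using assms by (simp add: qroot_def)
  ultimately show ?thesis
    unfolding f_scaled_def by simp
qed

lemma f_scaled_has_root:
  assumes "N \<ge> 3"
  obtains \<theta> where "root N 2 - 1 < \<theta>" "f_scaled N \<theta> = 0"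
proof -
  have "continuous_on {root N 2 - 1..1} (f_scaled N)"
    unfolding f_scaled_def[abs_def] qroot_def by (intro continuous_intros)
  moreover have "root N 2 - 1 \<le> 1"
    using root_two_bounds[of N] assms by linarith
  ultimately obtain \<theta> where "root N 2 - 1 \<le> \<theta>" "f_scaled N \<theta> = 0"
    using IVT2'[of "f_scaled N" 1 0 "root N 2 - 1"]
      f_scaled_at_one_neg[OF assms] f_scaled_at_root_two_pos[OF assms] by force
  moreover from this have "\<theta> \<noteq> root N 2 - 1"
    using f_scaled_at_root_two_pos[OF assms] by auto
  ultimately show thesis
    using that order_le_neq_trans by metis
qed

lemma unimodal_if_deriv_sign_change:
  fixes g g' :: "real \<Rightarrow> real"
  assumes deriv: "\<And>x. x > t0 \<Longrightarrow> (g has_real_derivative g' x) (at x)"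
    and pos: "\<And>x. t0 < x \<Longrightarrow> x < \<theta>0 \<Longrightarrow> g' x > 0"
    and neg: "\<And>x. \<theta>0 < x \<Longrightarrow> g' x < 0"
    and "t0 < \<theta>0"
  shows "\<forall>a b. t0 < a \<and> a < b \<and> b \<le> \<theta>0 \<longrightarrow> g a < g b"
    and "\<forall>a b. \<theta>0 \<le> a \<and> a < b \<longrightarrow> g a > g b"
    and "\<forall>x>t0. g x \<le> g \<theta>0"
proof -
  have cont: "continuous_on {a..b} g" if "t0 < a" for a b
    using that by (intro continuous_at_imp_continuous_on ballI DERIV_isCont[OF deriv]) auto
  have inc: "g a < g b" if "t0 < a" "a < b" "b \<le> \<theta>0" for a b
  proof (rule DERIV_pos_imp_increasing_open[OF \<open>a < b\<close> _ cont[OF \<open>t0 < a\<close>]])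
    fix x assume "a < x" "x < b"
    then have "t0 < x" "x < \<theta>0"
      using that by linarith+
    then show "\<exists>y. (g has_real_derivative y) (at x) \<and> 0 < y"
      by (intro exI[of _ "g' x"] conjI deriv pos)
  qed
  have dec: "g a > g b" if "\<theta>0 \<le> a" "a < b" for a b
  proof (rule DERIV_neg_imp_decreasing_open[OF \<open>a < b\<close> _ cont])
    show "t0 < a"
      using that \<open>t0 < \<theta>0\<close> by linarith
    fix x assume "a < x" "x < b"
    then have "t0 < x" "\<theta>0 < x"
      using that \<open>t0 < \<theta>0\<close> by linarith+
    then show "\<exists>y. (g has_real_derivative y) (at x) \<and> y < 0"
      by (intro exI[of _ "g' x"] conjI deriv neg)
  qed
  show "\<forall>a b. t0 < a \<and> a < b \<and> b \<le> \<theta>0 \<longrightarrow> g a < g b"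
    using inc by blast
  show "\<forall>a b. \<theta>0 \<le> a \<and> a < b \<longrightarrow> g a > g b"
    using dec by blast
  show "\<forall>x>t0. g x \<le> g \<theta>0"
  proof (intro allI impI)
    fix x assume "t0 < x"
    then show "g x \<le> g \<theta>0"
      using inc[of x \<theta>0] dec[of \<theta>0 x] by (cases x \<theta>0 rule: linorder_cases) auto
  qed
qed

lemma has_real_derivative_eps_c:
  assumes "odd N" "N \<ge> 3" "\<theta> > root N 2 - 1"
  shows "((\<lambda>\<theta>. real_of_ereal (eps_c N \<theta>)) has_real_derivative f N \<theta> / \<theta>\<^sup>2) (at \<theta>)"
proof (rule has_field_derivative_transform_within_open[of "eps_crit N" _ _ "{root N 2 - 1<..}"])
  show "(eps_crit N has_real_derivative f N \<theta> / \<theta>\<^sup>2) (at \<theta>)"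
    using has_real_derivative_eps_crit[OF assms(2,3,1)] .
qed (use assms(3) in \<open>simp_all add: eps_c_eq_eps_crit[OF assms(2) _ assms(1)]\<close>)

lemma f_sign_change_at_f_scaled_root:
  assumes "odd N" "N \<ge> 3" "\<theta>s > root N 2 - 1" "f_scaled N \<theta>s = 0"
  shows f_pos_before_root: "\<And>\<theta>. root N 2 - 1 < \<theta> \<Longrightarrow> \<theta> < \<theta>s \<Longrightarrow> f N \<theta> / \<theta>\<^sup>2 > 0"
    and f_neg_after_root: "\<And>\<theta>. \<theta>s < \<theta> \<Longrightarrow> f N \<theta> / \<theta>\<^sup>2 < 0"
proof -
  fix \<theta> assume "root N 2 - 1 < \<theta>" "\<theta> < \<theta>s"
  then have "f_scaled N \<theta> > 0"
    using f_scaled_strict_antimono[OF assms(2), of \<theta> \<theta>s] assms(4) by simp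
  then show "f N \<theta> / \<theta>\<^sup>2 > 0"
    using sgn_deriv_eps_crit[OF assms(2) \<open>root N 2 - 1 < \<theta>\<close> assms(1)] by (metis sgn_greater)
next
  fix \<theta> assume "\<theta>s < \<theta>"
  then have "f_scaled N \<theta> < 0"
    using f_scaled_strict_antimono[OF assms(2), of \<theta>s \<theta>] assms(3,4) by simp
  moreover have "root N 2 - 1 < \<theta>"
    using \<open>\<theta>s < \<theta>\<close> assms(3) by linarith
  ultimately show "f N \<theta> / \<theta>\<^sup>2 < 0"
    using sgn_deriv_eps_crit[OF assms(2) _ assms(1)] by (metis sgn_less)
qed

theorem lemma3:
  fixes N :: nat
  assumes "odd N" and "N \<ge> 3"
  defines "t0 \<equiv> root N 2 - 1"
  defines "ec \<equiv> (\<lambda>\<theta>. real_of_ereal (eps_c N \<theta>))"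
  shows "(\<forall>\<theta>>t0. \<bar>eps_c N \<theta>\<bar> \<noteq> \<infinity> \<and>
            (ec has_real_derivative (f N \<theta> / \<theta>\<^sup>2)) (at \<theta>))
       \<and> (\<exists>!\<theta>0. \<theta>0 > t0 \<and> (ec has_real_derivative 0) (at \<theta>0))
       \<and> (\<forall>\<theta>0. \<theta>0 > t0 \<and> (ec has_real_derivative 0) (at \<theta>0) \<longrightarrow>
            (\<forall>\<theta>>t0. ec \<theta> \<le> ec \<theta>0)
          \<and> (\<forall>a b. t0 < a \<and> a < b \<and> b \<le> \<theta>0 \<longrightarrow> ec a < ec b)
          \<and> (\<forall>a b. \<theta>0 \<le> a \<and> a < b \<longrightarrow> ec a > ec b))"
proof -
  obtain \<theta>s where \<theta>s: "\<theta>s > t0" "f_scaled N \<theta>s = 0"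
    using f_scaled_has_root[OF assms(2)] unfolding t0_def by blast
  have deriv: "(ec has_real_derivative f N \<theta> / \<theta>\<^sup>2) (at \<theta>)" if "\<theta> > t0" for \<theta>
    using has_real_derivative_eps_c[OF assms(1,2)] that unfolding ec_def t0_def by blast
  note f_pos = f_pos_before_root[OF assms(1,2) \<theta>s[unfolded t0_def], folded t0_def]
  note f_neg = f_neg_after_root[OF assms(1,2) \<theta>s[unfolded t0_def]]
  have f_at_root: "f N \<theta>s / \<theta>s\<^sup>2 = 0"
    using sgn_deriv_eps_crit[OF assms(2) \<theta>s(1)[unfolded t0_def] assms(1)] \<theta>s(2) by (simp add: sgn_0_0)
  have stationary_iff: "\<theta>0 > t0 \<and> (ec has_real_derivative 0) (at \<theta>0) \<longleftrightarrow> \<theta>0 = \<theta>s" for \<theta>0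
  proof
    assume stationary: "\<theta>0 > t0 \<and> (ec has_real_derivative 0) (at \<theta>0)"
    then have "f N \<theta>0 / \<theta>0\<^sup>2 = 0"
      using DERIV_unique[OF deriv] by blast
    then show "\<theta>0 = \<theta>s"
      using f_pos[of \<theta>0] f_neg[of \<theta>0] stationary by (cases \<theta>0 \<theta>s rule: linorder_cases) auto
  next
    assume "\<theta>0 = \<theta>s"
    then show "\<theta>0 > t0 \<and> (ec has_real_derivative 0) (at \<theta>0)"
      using \<theta>s(1) deriv[OF \<theta>s(1), unfolded f_at_root] by simp
  qed
  note unimodal = unimodal_if_deriv_sign_change[OF deriv f_pos f_neg \<theta>s(1)]
  show ?thesis
  proof (intro conjI)
    show "\<forall>\<theta>>t0. \<bar>eps_c N \<theta>\<bar> \<noteq> \<infinity> \<and> (ec has_real_derivative (f N \<theta> / \<theta>\<^sup>2)) (at \<theta>)"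
      using eps_c_eq_eps_crit[OF assms(2) _ assms(1)] deriv unfolding t0_def by simp
    show "\<exists>!\<theta>0. \<theta>0 > t0 \<and> (ec has_real_derivative 0) (at \<theta>0)"
      unfolding stationary_iff by blast
    show "\<forall>\<theta>0. \<theta>0 > t0 \<and> (ec has_real_derivative 0) (at \<theta>0) \<longrightarrow>
        (\<forall>\<theta>>t0. ec \<theta> \<le> ec \<theta>0)
      \<and> (\<forall>a b. t0 < a \<and> a < b \<and> b \<le> \<theta>0 \<longrightarrow> ec a < ec b)
      \<and> (\<forall>a b. \<theta>0 \<le> a \<and> a < b \<longrightarrow> ec a > ec b)"
      unfolding stationary_iff using unimodal by (intro allI impI conjI) simp_all
  qed
qed

end
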